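(* For any family of pointed spaces $\{(X_i,x_i)\}_{i\in I}$ and any $n\geq1$, $$\mathcal{H}_n\Big(\prod_{i\in I}X_i,x_\ast\Big)\cong\prod_{i\in I}\mathcal{H}_n(X_i,x_i),$$ where $x_\ast=(x_i)_{i\in I}\in\prod_{i\in I}X_i$ (product topology).
   Context: For $n\geq1$, the $n$-dimensional Hawaiian earring is $\mathbb{H}^n=\{(r_0,\dots,r_n)\in\mathbb{R}^{n+1} : (r_0-1/k)^2+\sum_{i=1}^n r_i^2=(1/k)^2 \text{ for some } k\in\mathbb{N}\}$ with base point $\theta=(0,\dots,0)$; $S^n_k$ denotes the $n$-sphere of radius $1/k$ in it. For a pointed space $(X,x_0)$, the $n$-Hawaiian group $\mathcal{H}_n(X,x_0)$ is the set of pointed homotopy classes (rel $\{\theta\}$) of continuous maps $f:(\mathbb{H}^n,\theta)\to(X,x_0)$, with group operation $[f][g]=[f\ast g]$, where $(f\ast g)|_{S^n_k}$ is the usual concatenation (as in $\pi_n$) of $f|_{S^n_k}$ and $g|_{S^n_k}$ for each $k$. *)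

theory Defs
  imports "HOL-Analysis.Analysis" "HOL-Algebra.Product_Groups"
begin

text \<open>Points of R^(n+1) are represented as functions nat => real whose coordinates
  beyond n vanish; nat => real carries the product (= Euclidean on the finite-dimensional
  subspace) topology.\<close>

type_synonym pt = "nat \<Rightarrow> real"

definition hbase :: pt where "hbase = (\<lambda>i. 0)"

definition hsphere :: "nat \<Rightarrow> nat \<Rightarrow> pt set" where
  "hsphere n k = {r. (\<forall>i>n. r i = 0) \<and>
      (r 0 - 1 / real k)\<^sup>2 + (\<Sum>i\<in>{1..n}. (r i)\<^sup>2) = (1 / real k)\<^sup>2}"

definition hawaiian_earring :: "nat \<Rightarrow> pt set" where
  "hawaiian_earring n = (\<Union>k\<in>{1..}. hsphere n k)"

definition HE :: "nat \<Rightarrow> pt topology" where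
  "HE n = top_of_set (hawaiian_earring n)"

definition open_cube :: "nat \<Rightarrow> pt set" where
  "open_cube n = {t. (\<forall>i\<in>{1..n}. 0 < t i \<and> t i < 1) \<and> (\<forall>i. i \<notin> {1..n} \<longrightarrow> t i = 0)}"

text \<open>The standard quotient map I^n -> S^n_k collapsing the boundary of I^n to theta:
  the interior is sent homeomorphically onto R^n (via tan) and then onto S^n_k minus theta
  by inverse stereographic projection from theta.\<close>
definition cube_to_sphere :: "nat \<Rightarrow> nat \<Rightarrow> pt \<Rightarrow> pt" where
  "cube_to_sphere n k t =
     (if t \<in> open_cube n then
        (let u = (\<lambda>i. tan (pi * (t i - 1/2)));
             s = (4 / (real k)\<^sup>2) / (4 / (real k)\<^sup>2 + (\<Sum>i\<in>{1..n}. (u i)\<^sup>2))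
         in (\<lambda>i. if i = 0 then s * (2 / real k) else if i \<in> {1..n} then s * u i else 0))
      else hbase)"

text \<open>Concatenation (f * g): on each sphere S^n_k, the usual pi_n-concatenation of
  f|S^n_k and g|S^n_k along the first cube coordinate.\<close>
definition hconcat :: "nat \<Rightarrow> (pt \<Rightarrow> 'a) \<Rightarrow> (pt \<Rightarrow> 'a) \<Rightarrow> pt \<Rightarrow> 'a" where
  "hconcat n f g p =
     (if p = hbase then f hbase
      else (let k = (THE k. k \<ge> 1 \<and> p \<in> hsphere n k);
                t = (THE t. t \<in> open_cube n \<and> cube_to_sphere n k t = p)
            in if t 1 \<le> 1/2 then f (cube_to_sphere n k (t(1 := 2 * t 1)))
               else g (cube_to_sphere n k (t(1 := 2 * t 1 - 1)))))"

definition hmaps :: "nat \<Rightarrow> 'a topology \<Rightarrow> 'a \<Rightarrow> (pt \<Rightarrow> 'a) set" where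
  "hmaps n X x0 = {f. continuous_map (HE n) X f \<and> f hbase = x0}"

definition hclass :: "nat \<Rightarrow> 'a topology \<Rightarrow> 'a \<Rightarrow> (pt \<Rightarrow> 'a) \<Rightarrow> (pt \<Rightarrow> 'a) set" where
  "hclass n X x0 f = {g \<in> hmaps n X x0. homotopic_with (\<lambda>h. h hbase = x0) (HE n) X f g}"

definition hawaiian_group :: "nat \<Rightarrow> 'a topology \<Rightarrow> 'a \<Rightarrow> (pt \<Rightarrow> 'a) set monoid" where
  "hawaiian_group n X x0 =
     \<lparr>carrier = hclass n X x0 ` hmaps n X x0,
      monoid.mult = (\<lambda>A B. hclass n X x0 (hconcat n (SOME f. f \<in> A) (SOME g. g \<in> B))),
      one = hclass n X x0 (\<lambda>p. x0)\<rparr>"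

end

theory Submission
  imports Defs
begin

text \<open>Projecting to the factors induces the isomorphism: continuity and homotopies rel theta
  into a product are componentwise, so the map on classes is bijective, and concatenation
  commutes with the projections. The real work is that the group operation, defined through
  arbitrary representatives, is well defined, i.e. that concatenation respects homotopy rel theta.
  For this, f * g is rewritten as f \<circ> pinch_left or g \<circ> pinch_right, where the pinch maps are
  self-maps of the earring sending each S^n_k onto itself by doubling the first cube coordinate
  on one half and collapsing the other half to theta. Away from theta they are given by a closed
  formula; continuity at theta, where the spheres accumulate, follows from the estimate
  |pinch(p)_j|^4 \<le> 64 |p|^2. A homotopy of f and one of g then paste to a homotopy of f * g.\<close>

lemma sum_atLeast0_atMost_split:
  fixes f :: "nat \<Rightarrow> 'a::comm_monoid_add"
  shows "(\<Sum>i\<in>{0..n}. f i) = f 0 + (\<Sum>i\<in>{1..n}. f i)"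
  using sum.atLeast_Suc_atMost[of 0 n f] by simp

lemma sum_atLeast1_atMost_split:
  fixes f :: "nat \<Rightarrow> 'a::comm_monoid_add"
  shows "n \<ge> 1 \<Longrightarrow> (\<Sum>i\<in>{1..n}. f i) = f 1 + (\<Sum>i\<in>{2..n}. f i)"
  using sum.atLeast_Suc_atMost[of 1 n f] by (simp add: numeral_2_eq_2)

lemma tan_double_arctan_shift:
  fixes w :: real
  assumes w: "w \<noteq> 0"
  shows "tan (pi/2 + 2 * arctan w) = (w\<^sup>2 - 1) / (2 * w)"
    "tan (2 * arctan w - pi/2) = (w\<^sup>2 - 1) / (2 * w)"
proof -
  define th where "th = arctan w"
  have q: "1 + w\<^sup>2 > 0" by (simp add: add_pos_nonneg)
  have cs: "(cos th)\<^sup>2 = 1 / (1 + w\<^sup>2)" "(sin th)\<^sup>2 = w\<^sup>2 / (1 + w\<^sup>2)"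
    "sin th * cos th = w / (1 + w\<^sup>2)"
    unfolding th_def cos_arctan sin_arctan using q
    by (simp_all add: power_divide power2_eq_square)
  have c2: "cos (2 * th) = (1 - w\<^sup>2) / (1 + w\<^sup>2)"
    unfolding cos_double cs diff_divide_distrib ..
  have s2: "sin (2 * th) = 2 * w / (1 + w\<^sup>2)"
    unfolding sin_double using cs(3) by (simp add: mult.assoc)
  have e1: "sin (pi/2 + 2 * th) = cos (2 * th)" "cos (pi/2 + 2 * th) = - sin (2 * th)"
    by (simp_all add: sin_add cos_add)
  have e2: "sin (2 * th - pi/2) = - cos (2 * th)" "cos (2 * th - pi/2) = sin (2 * th)"
    by (simp_all add: sin_diff cos_diff)
  show "tan (pi/2 + 2 * arctan w) = (w\<^sup>2 - 1) / (2 * w)"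
    unfolding th_def[symmetric] tan_def e1 c2 s2 using q w
    by (simp add: divide_simps)
  show "tan (2 * arctan w - pi/2) = (w\<^sup>2 - 1) / (2 * w)"
    unfolding th_def[symmetric] tan_def e2 c2 s2 using q w
    by (simp add: divide_simps)
qed

lemma square_ge_products:
  fixes X Y Z :: real
  assumes X: "0 \<le> X" and Y: "0 \<le> Y" and Z: "0 \<le> Z"
  defines "D \<equiv> 4 * X + 4 * Y + Z"
  shows "16 * X\<^sup>2 \<le> D\<^sup>2" "16 * X * Y \<le> D\<^sup>2" "16 * X * Z \<le> D\<^sup>2"
proof -
  have "D\<^sup>2 - 16 * X\<^sup>2 = (D - 4*X) * (D + 4*X)" by (simp add: power2_eq_square algebra_simps)
  also have "\<dots> \<ge> 0" using X Y Z by (simp add: D_def)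
  finally show "16 * X\<^sup>2 \<le> D\<^sup>2" by simp
  have "D\<^sup>2 - 16 * X * Y = (4*X - 4*Y)\<^sup>2 + Z * (8*X + 8*Y + Z) + 48 * X * Y"
    by (simp add: D_def power2_eq_square algebra_simps)
  also have "\<dots> \<ge> 0" using X Y Z by (intro add_nonneg_nonneg mult_nonneg_nonneg) auto
  finally show "16 * X * Y \<le> D\<^sup>2" by simp
  have "D\<^sup>2 - 16 * X * Z = (4*X - Z)\<^sup>2 + 4 * Y * (8*X + 4*Y + 2*Z)"
    by (simp add: D_def power2_eq_square algebra_simps)
  also have "\<dots> \<ge> 0" using X Y Z by (intro add_nonneg_nonneg mult_nonneg_nonneg) auto
  finally show "16 * X * Z \<le> D\<^sup>2" by simp
qed

lemma sixth_power_le_quadratic_terms: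
  fixes a w :: real
  assumes a0: "0 < a" and a4: "a \<le> 4"
  shows "a\<^sup>2 * w^4 * w\<^sup>2 \<le> 4 * (a * w\<^sup>2)\<^sup>2 + (64/9) * (a * w\<^sup>2) * (w\<^sup>2 - 1)\<^sup>2"
proof (cases "w\<^sup>2 \<le> 4")
  case True
  have "a\<^sup>2 * w^4 * w\<^sup>2 = (a * w\<^sup>2)\<^sup>2 * w\<^sup>2" by (simp add: power2_eq_square power4_eq_xxxx)
  also have "\<dots> \<le> (a * w\<^sup>2)\<^sup>2 * 4" using True by (intro mult_left_mono) auto
  moreover have "0 \<le> (64/9) * (a * w\<^sup>2) * (w\<^sup>2 - 1)\<^sup>2" using a0 by simp
  ultimately show ?thesis by linarith
next
  case False
  then have "(3/4) * w\<^sup>2 \<le> w\<^sup>2 - 1" by simp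
  then have "((3/4) * w\<^sup>2)\<^sup>2 \<le> (w\<^sup>2 - 1)\<^sup>2" by (intro power_mono) auto
  moreover have "((3/4) * w\<^sup>2)\<^sup>2 = (9/16) * (w\<^sup>2)\<^sup>2" by (simp add: power2_eq_square)
  ultimately have wz: "(w\<^sup>2)\<^sup>2 \<le> (16/9) * (w\<^sup>2 - 1)\<^sup>2" by linarith
  have "a\<^sup>2 * w^4 * w\<^sup>2 = a * (a * w\<^sup>2) * (w\<^sup>2)\<^sup>2" by (simp add: power2_eq_square power4_eq_xxxx)
  also have "\<dots> \<le> 4 * (a * w\<^sup>2) * ((16/9) * (w\<^sup>2 - 1)\<^sup>2)"
    using a4 wz a0 by (intro mult_mono) auto
  also have "\<dots> = (64/9) * (a * w\<^sup>2) * (w\<^sup>2 - 1)\<^sup>2" by simp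
  finally show ?thesis using zero_le_power2[of "a * w\<^sup>2"] by linarith
qed

lemma mult_divide_square_le: "0 \<le> c \<Longrightarrow> c \<le> D \<Longrightarrow> 0 < (D::real) \<Longrightarrow> 0 \<le> M \<Longrightarrow> M * c / D\<^sup>2 \<le> M / D"
  by (simp add: divide_simps power2_eq_square mult_left_mono)

lemma abs_le_sqrt_sqrt:
  fixes x y :: real
  assumes "x^4 \<le> y"
  shows "\<bar>x\<bar> \<le> sqrt (sqrt y)"
proof -
  have "sqrt (sqrt (x^4)) = \<bar>x\<bar>"
  proof -
    have "x^4 = (x\<^sup>2)\<^sup>2" by (simp add: power4_eq_xxxx power2_eq_square)
    then have "sqrt (x^4) = x\<^sup>2" using real_sqrt_abs[of "x\<^sup>2"] by simp
    then show ?thesis by simp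
  qed
  moreover have "sqrt (sqrt (x^4)) \<le> sqrt (sqrt y)" using assms by simp
  ultimately show ?thesis by simp
qed

lemma continuous_on_dominated_at_point:
  fixes h :: "'a::t2_space \<Rightarrow> 'b::real_normed_vector" and g :: "'a \<Rightarrow> real"
  assumes U: "open U" and off: "S - U \<subseteq> {a}" and hU: "continuous_on (S \<inter> U) h"
    and ha: "h a = 0" and dom: "\<And>p. p \<in> S \<Longrightarrow> norm (h p) \<le> g p"
    and g: "isCont g a" "g a = 0"
  shows "continuous_on S h"
  unfolding continuous_on_eq_continuous_within
proof
  fix x assume x: "x \<in> S"
  show "continuous (at x within S) h"
  proof (cases "x \<in> U")
    case True
    have "at x within S = at x within (S \<inter> U)"
      by (rule at_within_nhd[OF True U]) auto
    moreover have "continuous (at x within (S \<inter> U)) h"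
      using hU True x continuous_on_eq_continuous_within by blast
    ultimately show ?thesis by simp
  next
    case False
    then have xa: "x = a" using off x by blast
    have "eventually (\<lambda>p. norm (h p) \<le> g p) (at a within S)"
      unfolding eventually_at_filter using dom by (auto intro: always_eventually)
    moreover have "(g \<longlongrightarrow> 0) (at a within S)"
      using g continuous_at_imp_continuous_at_within continuous_within by metis
    ultimately have "(h \<longlongrightarrow> 0) (at a within S)" by (rule Lim_null_comparison)
    then show ?thesis using xa ha by (simp add: continuous_within)
  qed
qed

section \<open>The spheres of the earring\<close>

definition sqnorm :: "nat \<Rightarrow> pt \<Rightarrow> real" where
  "sqnorm n p = (\<Sum>i\<in>{0..n}. (p i)\<^sup>2)"

lemma hsphere_sqnorm:
  assumes p: "p \<in> hsphere n k" and k: "k \<ge> 1"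
  shows "sqnorm n p = 2 * p 0 / real k"
proof -
  have e: "(p 0 - 1 / real k)\<^sup>2 + (\<Sum>i\<in>{1..n}. (p i)\<^sup>2) = (1 / real k)\<^sup>2"
    using p by (simp add: hsphere_def)
  have "(p 0 - 1 / real k)\<^sup>2 = (p 0)\<^sup>2 - 2 * p 0 / real k + (1 / real k)\<^sup>2"
    using k by (simp add: power2_eq_square field_simps)
  then show ?thesis using e by (simp add: sqnorm_def sum_atLeast0_atMost_split)
qed

lemma hsphere_first_coord_pos:
  assumes p: "p \<in> hsphere n k" and k: "k \<ge> 1" and nb: "p \<noteq> hbase"
  shows "0 < p 0"
proof -
  have N: "sqnorm n p = 2 * p 0 / real k" by (rule hsphere_sqnorm[OF p k])
  have "sqnorm n p \<ge> 0" unfolding sqnorm_def by (simp add: sum_nonneg)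
  then have ge: "p 0 \<ge> 0" using N k by (simp add: zero_le_divide_iff)
  show ?thesis
  proof (rule ccontr)
    assume "\<not> 0 < p 0"
    then have "p 0 = 0" using ge by simp
    then have "sqnorm n p = 0" using N by simp
    then have z: "\<forall>i\<in>{0..n}. (p i)\<^sup>2 = 0"
      unfolding sqnorm_def by (subst sum_nonneg_eq_0_iff[symmetric]) auto
    have "p = hbase"
    proof
      fix i show "p i = hbase i"
        using z p by (cases "i \<le> n") (auto simp: hbase_def hsphere_def)
    qed
    then show False using nb by simp
  qed
qed

lemma hbase_in_hsphere: "hbase \<in> hsphere n k"
  by (simp add: hsphere_def hbase_def)

lemma hbase_in_hawaiian_earring: "hbase \<in> hawaiian_earring n"
  using hbase_in_hsphere[of n 1] by (auto simp: hawaiian_earring_def)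

lemma sqnorm_hbase: "sqnorm n hbase = 0"
  by (simp add: sqnorm_def hbase_def)

lemma hsphere_index_unique:
  assumes "p \<in> hsphere n k" "p \<in> hsphere n k'" "k \<ge> 1" "k' \<ge> 1" "p \<noteq> hbase"
  shows "k = k'"
proof -
  have "0 < p 0" using hsphere_first_coord_pos assms by blast
  moreover have "2 * p 0 / real k = 2 * p 0 / real k'"
    using hsphere_sqnorm assms by metis
  ultimately show ?thesis using assms by (simp add: field_simps)
qed

lemma The_hsphere_index:
  assumes "p \<in> hsphere n k" "k \<ge> 1" "p \<noteq> hbase"
  shows "(THE k. k \<ge> 1 \<and> p \<in> hsphere n k) = k"
  using assms hsphere_index_unique by (intro the_equality) blast+

section \<open>Cube coordinates on a sphere\<close>

lemma stereographic_identity: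
  fixes k U :: real
  assumes k: "k > 0" and U: "U \<ge> 0"
  shows "((4/k\<^sup>2)/(4/k\<^sup>2 + U) * (2/k) - 1/k)\<^sup>2 + ((4/k\<^sup>2)/(4/k\<^sup>2 + U))\<^sup>2 * U = (1/k)\<^sup>2"
proof -
  define a where "a = 4/k\<^sup>2"
  define s where "s = a / (a + U)"
  have pos: "a + U > 0" using k U by (simp add: a_def add_pos_nonneg)
  have sa: "s * (a + U) = a" using pos by (simp add: s_def)
  have "(s*(2/k) - 1/k)\<^sup>2 + s\<^sup>2*U = s*(s*(a+U)) - s*a + (1/k)\<^sup>2"
    using k by (simp add: a_def power2_eq_square field_simps)
  also have "\<dots> = (1/k)\<^sup>2" by (simp add: sa)
  finally show ?thesis by (simp add: a_def s_def)
qed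

lemma cube_to_sphere_on_open_cube:
  assumes "t \<in> open_cube n"
  shows "cube_to_sphere n k t = (\<lambda>i. if i = 0 then
     ((4 / (real k)\<^sup>2) / (4 / (real k)\<^sup>2 + (\<Sum>i\<in>{1..n}. (tan (pi * (t i - 1/2)))\<^sup>2))) * (2 / real k)
     else if i \<in> {1..n} then
     ((4 / (real k)\<^sup>2) / (4 / (real k)\<^sup>2 + (\<Sum>i\<in>{1..n}. (tan (pi * (t i - 1/2)))\<^sup>2))) * tan (pi * (t i - 1/2))
     else 0)"
  using assms unfolding cube_to_sphere_def Let_def by (simp only: if_True)

lemma cube_to_sphere_in_hsphere:
  assumes k: "k \<ge> 1"
  shows "cube_to_sphere n k t \<in> hsphere n k"
proof (cases "t \<in> open_cube n")
  case False
  then show ?thesis by (simp add: cube_to_sphere_def hbase_in_hsphere)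
next
  case True
  define u where "u = (\<lambda>i. tan (pi * (t i - 1/2)))"
  define U where "U = (\<Sum>i\<in>{1..n}. (u i)\<^sup>2)"
  define s where "s = (4 / (real k)\<^sup>2) / (4 / (real k)\<^sup>2 + U)"
  have c: "cube_to_sphere n k t = (\<lambda>i. if i = 0 then s * (2 / real k) else if i \<in> {1..n} then s * u i else 0)"
    unfolding cube_to_sphere_on_open_cube[OF True] u_def U_def s_def ..
  have U0: "U \<ge> 0" by (simp add: U_def sum_nonneg)
  have sum: "(\<Sum>i\<in>{1..n}. (if i = 0 then s * (2 / real k) else if i \<in> {1..n} then s * u i else 0)\<^sup>2) = s\<^sup>2 * U"
    by (simp add: U_def sum_distrib_left power_mult_distrib)
  have "(s * (2 / real k) - 1 / real k)\<^sup>2 + s\<^sup>2 * U = (1 / real k)\<^sup>2"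
    unfolding s_def using stereographic_identity[of "real k" U] k U0 by simp
  then show ?thesis unfolding c hsphere_def using sum by simp
qed

definition sphere_to_cube :: "nat \<Rightarrow> real \<Rightarrow> pt \<Rightarrow> pt" where
  "sphere_to_cube n k p = (\<lambda>i. if i \<in> {1..n} then 1/2 + arctan (2 * p i / (k * p 0)) / pi else 0)"

lemma sphere_to_cube_in_open_cube: "sphere_to_cube n k p \<in> open_cube n"
proof -
  have "0 < 1/2 + arctan x / pi \<and> 1/2 + arctan x / pi < 1" for x
  proof -
    have "- (pi/2) < arctan x" "arctan x < pi/2" by (rule arctan_lbound, rule arctan_ubound)
    then show ?thesis by (simp add: field_simps)
  qed
  then show ?thesis by (simp add: open_cube_def sphere_to_cube_def)
qed

lemma tan_sphere_to_cube: "i \<in> {1..n} \<Longrightarrow> tan (pi * (sphere_to_cube n k p i - 1/2)) = 2 * p i / (k * p 0)"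
  by (simp add: sphere_to_cube_def tan_arctan)

lemma cube_to_sphere_sphere_to_cube:
  assumes p: "p \<in> hsphere n k" and k: "k \<ge> 1" and nb: "p \<noteq> hbase"
  shows "cube_to_sphere n k (sphere_to_cube n (real k) p) = p"
proof -
  have p0: "0 < p 0" by (rule hsphere_first_coord_pos[OF p k nb])
  have N: "sqnorm n p = 2 * p 0 / real k" by (rule hsphere_sqnorm[OF p k])
  define S where "S = (\<Sum>i\<in>{1..n}. (p i)\<^sup>2)"
  have S: "S = 2 * p 0 / real k - (p 0)\<^sup>2" using N by (simp add: sqnorm_def sum_atLeast0_atMost_split S_def)
  define U where "U = (\<Sum>i\<in>{1..n}. (tan (pi * (sphere_to_cube n (real k) p i - 1/2)))\<^sup>2)"
  have U: "U = 4 * S / ((real k)\<^sup>2 * (p 0)\<^sup>2)"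
    unfolding U_def S_def by (simp add: tan_sphere_to_cube sum_divide_distrib power_divide power_mult_distrib sum_distrib_left)
  have kpos: "real k > 0" using k by simp
  have s: "(4 / (real k)\<^sup>2) / (4 / (real k)\<^sup>2 + U) = real k * p 0 / 2"
    unfolding U S using p0 kpos by (simp add: field_simps power2_eq_square)
  show ?thesis
  proof
    fix i
    show "cube_to_sphere n k (sphere_to_cube n (real k) p) i = p i"
      unfolding cube_to_sphere_on_open_cube[OF sphere_to_cube_in_open_cube] U_def[symmetric] s
      using p0 kpos p by (auto simp: tan_sphere_to_cube hsphere_def)
  qed
qed

lemma sphere_to_cube_cube_to_sphere:
  assumes t: "t \<in> open_cube n" and k: "k \<ge> 1"
  shows "sphere_to_cube n (real k) (cube_to_sphere n k t) = t"
proof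
  fix i
  define S where "S = (4 / (real k)\<^sup>2) / (4 / (real k)\<^sup>2 + (\<Sum>i\<in>{1..n}. (tan (pi * (t i - 1/2)))\<^sup>2))"
  have Spos: "S > 0" unfolding S_def using k by (intro divide_pos_pos add_pos_nonneg) (auto intro: sum_nonneg)
  have c: "cube_to_sphere n k t = (\<lambda>i. if i = 0 then S * (2 / real k)
     else if i \<in> {1..n} then S * tan (pi * (t i - 1/2)) else 0)"
    unfolding cube_to_sphere_on_open_cube[OF t] S_def ..
  show "sphere_to_cube n (real k) (cube_to_sphere n k t) i = t i"
  proof (cases "i \<in> {1..n}")
    case True
    then have ti: "0 < t i" "t i < 1" using t by (auto simp: open_cube_def)
    have "2 * (S * tan (pi * (t i - 1/2))) / (real k * (S * (2 / real k))) = tan (pi * (t i - 1/2))"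
      using Spos k by (simp add: field_simps)
    moreover have "arctan (tan (pi * (t i - 1/2))) = pi * (t i - 1/2)"
      using ti by (intro arctan_tan) (simp_all add: field_simps)
    ultimately show ?thesis using True by (auto simp: sphere_to_cube_def c)
  next
    case False
    then show ?thesis using t by (auto simp: sphere_to_cube_def open_cube_def)
  qed
qed

lemma The_cube_preimage:
  assumes p: "p \<in> hsphere n k" and k: "k \<ge> 1" and nb: "p \<noteq> hbase"
  shows "(THE t. t \<in> open_cube n \<and> cube_to_sphere n k t = p) = sphere_to_cube n (real k) p"
  using cube_to_sphere_sphere_to_cube[OF assms] sphere_to_cube_in_open_cube sphere_to_cube_cube_to_sphere[OF _ k] by (intro the_equality) auto

lemma open_cube_update_first:
  assumes "t \<in> open_cube n" "n \<ge> 1" "0 < c" "c < 1"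
  shows "t(1 := c) \<in> open_cube n"
  using assms by (auto simp: open_cube_def)

lemma open_cube_update_first_one:
  assumes "n \<ge> 1"
  shows "t(1 := 1) \<notin> open_cube n"
  using assms by (auto simp: open_cube_def)

lemma hconcat_on_hsphere:
  assumes "p \<in> hsphere n k" "k \<ge> 1" "p \<noteq> hbase"
  defines "t \<equiv> sphere_to_cube n (real k) p"
  shows "hconcat n f g p = (if t 1 \<le> 1/2 then f (cube_to_sphere n k (t(1 := 2 * t 1)))
                            else g (cube_to_sphere n k (t(1 := 2 * t 1 - 1))))"
  unfolding hconcat_def Let_def The_hsphere_index[OF assms(1-3)] The_cube_preimage[OF assms(1-3)] t_def
  using assms(3) by simp

section \<open>The pinch maps\<close>

text \<open>For p in S^n_k other than theta, sphere_index n p = k, and stereo n p i = tan (pi (t i - 1/2))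
  where t is the cube preimage of p. The point pinch_point n p is the image under
  cube_to_sphere n k of t with its first coordinate doubled modulo 1, written out in these
  coordinates; unlike hconcat it involves no THE, so it is visibly continuous away from theta.\<close>

definition sphere_index :: "nat \<Rightarrow> pt \<Rightarrow> real" where
  "sphere_index n p = 2 * p 0 / sqnorm n p"

definition stereo :: "nat \<Rightarrow> pt \<Rightarrow> nat \<Rightarrow> real" where
  "stereo n p i = 2 * p i / (sphere_index n p * p 0)"

definition stereo1 :: "nat \<Rightarrow> pt \<Rightarrow> real" where
  "stereo1 n p = stereo n p 1"

definition stereo_tail :: "nat \<Rightarrow> pt \<Rightarrow> real" where
  "stereo_tail n p = (\<Sum>i\<in>{2..n}. (stereo n p i)\<^sup>2)"

definition index_weight :: "nat \<Rightarrow> pt \<Rightarrow> real" where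
  "index_weight n p = 4 / (sphere_index n p)\<^sup>2"

definition pinch_denom :: "nat \<Rightarrow> pt \<Rightarrow> real" where
  "pinch_denom n p = 4 * index_weight n p * (stereo1 n p)\<^sup>2 + 4 * (stereo1 n p)\<^sup>2 * stereo_tail n p
     + ((stereo1 n p)\<^sup>2 - 1)\<^sup>2"

definition pinch_scale :: "nat \<Rightarrow> pt \<Rightarrow> real" where
  "pinch_scale n p = 4 * index_weight n p * (stereo1 n p)\<^sup>2 / pinch_denom n p"

definition pinch_point :: "nat \<Rightarrow> pt \<Rightarrow> pt" where
  "pinch_point n p = (\<lambda>i. if i = 0 then pinch_scale n p * (2 / sphere_index n p)
     else if i = 1 then 2 * index_weight n p * stereo1 n p * ((stereo1 n p)\<^sup>2 - 1) / pinch_denom n p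
     else if i \<in> {2..n} then pinch_scale n p * stereo n p i else 0)"

lemma pinch_scale_identities:
  fixes a w R :: real
  assumes w: "w \<noteq> 0" and a: "a > 0" and R: "R \<ge> 0"
  defines "D \<equiv> 4 * a * w\<^sup>2 + 4 * w\<^sup>2 * R + (w\<^sup>2 - 1)\<^sup>2"
  shows "a / (a + (((w\<^sup>2 - 1) / (2 * w))\<^sup>2 + R)) = 4 * a * w\<^sup>2 / D"
    "a / (a + (((w\<^sup>2 - 1) / (2 * w))\<^sup>2 + R)) * ((w\<^sup>2 - 1) / (2 * w)) = 2 * a * w * (w\<^sup>2 - 1) / D"
proof -
  have w2: "w\<^sup>2 > 0" using w by simp
  have Dp: "D > 0" unfolding D_def using w2 a R
    by (intro add_pos_nonneg) (auto intro: mult_nonneg_nonneg)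
  have e: "a + (((w\<^sup>2 - 1) / (2 * w))\<^sup>2 + R) = D / (4 * w\<^sup>2)"
    unfolding D_def using w by (simp add: field_simps power2_eq_square)
  show "a / (a + (((w\<^sup>2 - 1) / (2 * w))\<^sup>2 + R)) = 4 * a * w\<^sup>2 / D"
    unfolding e using w Dp by (simp add: field_simps)
  then have "a / (a + (((w\<^sup>2 - 1) / (2 * w))\<^sup>2 + R)) * ((w\<^sup>2 - 1) / (2 * w))
      = 4 * a * w\<^sup>2 / D * ((w\<^sup>2 - 1) / (2 * w))" by simp
  also have "\<dots> = 2 * a * w * (w\<^sup>2 - 1) / D"
    using w Dp by (simp add: field_simps power2_eq_square)
  finally show "a / (a + (((w\<^sup>2 - 1) / (2 * w))\<^sup>2 + R)) * ((w\<^sup>2 - 1) / (2 * w)) = 2 * a * w * (w\<^sup>2 - 1) / D" .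
qed

lemma sphere_index_hsphere:
  assumes p: "p \<in> hsphere n k" and k: "k \<ge> 1" and nb: "p \<noteq> hbase"
  shows "sphere_index n p = real k"
  using hsphere_sqnorm[OF p k] hsphere_first_coord_pos[OF p k nb] k by (simp add: sphere_index_def)

lemma sphere_to_cube_first:
  assumes "n \<ge> 1" "p \<in> hsphere n k" "k \<ge> 1" "p \<noteq> hbase"
  shows "sphere_to_cube n (real k) p 1 = 1/2 + arctan (stereo1 n p) / pi"
  using assms by (simp add: sphere_to_cube_def stereo1_def stereo_def sphere_index_hsphere)

lemma stereo1_sign:
  assumes "p \<in> hsphere n k" "k \<ge> 1" "p \<noteq> hbase"
  shows "stereo1 n p < 0 \<longleftrightarrow> p 1 < 0" "stereo1 n p = 0 \<longleftrightarrow> p 1 = 0"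
proof -
  have "real k * p 0 > 0" using hsphere_first_coord_pos[OF assms] assms(2) by simp
  then show "stereo1 n p < 0 \<longleftrightarrow> p 1 < 0" "stereo1 n p = 0 \<longleftrightarrow> p 1 = 0"
    by (auto simp: stereo1_def stereo_def sphere_index_hsphere[OF assms] divide_less_0_iff)
qed

lemma cube_to_sphere_eq_pinch_point:
  assumes n: "n \<ge> 1" and t: "t \<in> open_cube n" and kp: "sphere_index n p = real k" and k: "k \<ge> 1"
    and w: "stereo1 n p \<noteq> 0"
    and t1: "tan (pi * (t 1 - 1/2)) = ((stereo1 n p)\<^sup>2 - 1) / (2 * stereo1 n p)"
    and ti: "\<And>i. i \<in> {2..n} \<Longrightarrow> tan (pi * (t i - 1/2)) = stereo n p i"
  shows "cube_to_sphere n k t = pinch_point n p"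
proof -
  have a: "index_weight n p > 0" "index_weight n p = 4 / (real k)\<^sup>2" using kp k by (auto simp: index_weight_def)
  have R: "stereo_tail n p \<ge> 0" by (simp add: stereo_tail_def sum_nonneg)
  have sum: "(\<Sum>i\<in>{1..n}. (tan (pi * (t i - 1/2)))\<^sup>2) =
      (((stereo1 n p)\<^sup>2 - 1) / (2 * stereo1 n p))\<^sup>2 + stereo_tail n p"
    unfolding sum_atLeast1_atMost_split[OF n] t1 stereo_tail_def by (simp add: ti)
  note da = pinch_scale_identities[OF w a(1) R, folded pinch_denom_def pinch_scale_def]
  have S1: "(4 / (real k)\<^sup>2) / (4 / (real k)\<^sup>2 + ((((stereo1 n p)\<^sup>2 - 1) / (2 * stereo1 n p))\<^sup>2 + stereo_tail n p)) = pinch_scale n p"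
    using da(1) unfolding a(2) .
  have S2: "pinch_scale n p * (((stereo1 n p)\<^sup>2 - 1) / (2 * stereo1 n p)) = 2 * index_weight n p * stereo1 n p * ((stereo1 n p)\<^sup>2 - 1) / pinch_denom n p"
    using da(2) unfolding da(1) by (simp add: mult.assoc)
  show ?thesis
  proof
    fix i
    show "cube_to_sphere n k t i = pinch_point n p i"
    proof -
      consider "i = 0" | "i = 1" | "i \<in> {2..n}" | "i \<noteq> 0" "i \<notin> {1..n}" by force
      then show ?thesis
      proof cases
        case 1 then show ?thesis unfolding cube_to_sphere_on_open_cube[OF t] sum S1 pinch_point_def by (simp add: kp)
      next
        have t1': "tan (pi * (t (Suc 0) - 1/2)) = ((stereo1 n p)\<^sup>2 - 1) / (2 * stereo1 n p)" using t1 by simp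
        case 2 then show ?thesis unfolding cube_to_sphere_on_open_cube[OF t] sum S1 pinch_point_def using n by (simp add: t1' S2[unfolded times_divide_eq_right])
      next
        case 3 then show ?thesis unfolding cube_to_sphere_on_open_cube[OF t] sum S1 pinch_point_def by (simp add: ti)
      next
        case 4 then show ?thesis unfolding cube_to_sphere_on_open_cube[OF t] sum S1 pinch_point_def using n by auto
      qed
    qed
  qed
qed

text \<open>Doubling the first cube coordinate doubles the angle arctan w, shifted by pi/2 on
  either half; this turns the first stereographic coordinate w into (w^2 - 1) / (2 w).\<close>

lemma cube_to_sphere_double_first:
  assumes n: "n \<ge> 1" and p: "p \<in> hsphere n k" "k \<ge> 1" "p \<noteq> hbase"
    and w: "stereo1 n p \<noteq> 0" and s: "0 < s" "s < 1"
    and tan_s: "tan (pi * (s - 1/2)) = ((stereo1 n p)\<^sup>2 - 1) / (2 * stereo1 n p)"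
  shows "cube_to_sphere n k ((sphere_to_cube n (real k) p)(1 := s)) = pinch_point n p"
proof (rule cube_to_sphere_eq_pinch_point[OF n _ sphere_index_hsphere[OF p] p(2) w])
  show "(sphere_to_cube n (real k) p)(1 := s) \<in> open_cube n"
    using open_cube_update_first[OF sphere_to_cube_in_open_cube n s] .
  show "tan (pi * (((sphere_to_cube n (real k) p)(1 := s)) 1 - 1/2))
      = ((stereo1 n p)\<^sup>2 - 1) / (2 * stereo1 n p)"
    using tan_s by simp
  show "tan (pi * (((sphere_to_cube n (real k) p)(1 := s)) i - 1/2)) = stereo n p i"
    if "i \<in> {2..n}" for i
    using that by (simp add: tan_sphere_to_cube stereo_def sphere_index_hsphere[OF p])
qed

definition pinch_left :: "nat \<Rightarrow> pt \<Rightarrow> pt" where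
  "pinch_left n p = (if 0 < p 0 \<and> p 1 \<le> 0 then pinch_point n p else hbase)"

definition pinch_right :: "nat \<Rightarrow> pt \<Rightarrow> pt" where
  "pinch_right n p = (if 0 < p 0 \<and> 0 \<le> p 1 then pinch_point n p else hbase)"

lemma pinch_point_stereo1_zero: "stereo1 n p = 0 \<Longrightarrow> pinch_point n p = hbase"
  by (auto simp: pinch_point_def pinch_scale_def hbase_def)

lemma pinch_point_coordinate_zero: "p 1 = 0 \<Longrightarrow> pinch_point n p j = 0"
  using pinch_point_stereo1_zero[of n p] by (simp add: stereo1_def stereo_def hbase_def)

lemma pinch_denom_pos:
  assumes "sphere_index n p \<noteq> 0"
  shows "pinch_denom n p > 0"
proof (cases "stereo1 n p = 0")
  case True then show ?thesis by (simp add: pinch_denom_def)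
next
  case False
  have a: "index_weight n p > 0" using assms by (simp add: index_weight_def)
  have "stereo_tail n p \<ge> 0" by (simp add: stereo_tail_def sum_nonneg)
  then show ?thesis using a False unfolding pinch_denom_def
    by (intro add_pos_nonneg) (auto intro: mult_nonneg_nonneg)
qed

lemma pinch_point_neq_hbase:
  assumes "sphere_index n p > 0" "stereo1 n p \<noteq> 0"
  shows "pinch_point n p \<noteq> hbase"
proof -
  have "pinch_point n p 0 > 0" using pinch_denom_pos[of n p] assms
    by (simp add: pinch_point_def pinch_scale_def index_weight_def)
  then show ?thesis by (auto simp: hbase_def)
qed

lemma pinch_hbase: "pinch_left n hbase = hbase" "pinch_right n hbase = hbase"
  by (auto simp: pinch_left_def pinch_right_def hbase_def)

lemma pinch_hbase_coordinate: "pinch_left n hbase j = 0" "pinch_right n hbase j = 0"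
  by (simp_all add: pinch_hbase) (simp_all add: hbase_def)

lemma pinch_left_or_right_hbase: "pinch_left n p = hbase \<or> pinch_right n p = hbase"
proof -
  have "p 1 = 0 \<Longrightarrow> pinch_point n p = hbase" using pinch_point_stereo1_zero[of n p] by (simp add: stereo1_def stereo_def)
  then show ?thesis by (auto simp: pinch_left_def pinch_right_def)
qed

lemma pinch_left_half:
  assumes n: "n \<ge> 1" and p: "p \<in> hsphere n k" "k \<ge> 1" "p \<noteq> hbase" and neg: "p 1 < 0"
  defines "t \<equiv> sphere_to_cube n (real k) p"
  shows "t 1 \<le> 1/2" "cube_to_sphere n k (t(1 := 2 * t 1)) = pinch_point n p"
proof -
  define w where "w = stereo1 n p"
  have t1: "t 1 = 1/2 + arctan w / pi" unfolding t_def w_def by (rule sphere_to_cube_first[OF n p])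
  have wn: "w < 0" using stereo1_sign(1)[OF p] neg by (simp add: w_def)
  then have at: "arctan w < 0" by simp
  show "t 1 \<le> 1/2" unfolding t1 using at by (simp add: divide_nonpos_pos)
  have "- (pi/2) < arctan w" by (rule arctan_lbound)
  then have s: "0 < 2 * t 1" "2 * t 1 < 1" unfolding t1 using at by (simp_all add: field_simps)
  have "pi * (2 * t 1 - 1/2) = pi/2 + 2 * arctan w" unfolding t1 by (simp add: field_simps)
  then have "tan (pi * (2 * t 1 - 1/2)) = (w\<^sup>2 - 1) / (2 * w)"
    using tan_double_arctan_shift(1)[of w] wn by simp
  then show "cube_to_sphere n k (t(1 := 2 * t 1)) = pinch_point n p"
    using cube_to_sphere_double_first[OF n p, of "2 * t 1"] wn s by (simp add: t_def w_def)
qed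

lemma pinch_right_half:
  assumes n: "n \<ge> 1" and p: "p \<in> hsphere n k" "k \<ge> 1" "p \<noteq> hbase" and pos: "0 < p 1"
  defines "t \<equiv> sphere_to_cube n (real k) p"
  shows "\<not> t 1 \<le> 1/2" "cube_to_sphere n k (t(1 := 2 * t 1 - 1)) = pinch_point n p"
proof -
  define w where "w = stereo1 n p"
  have t1: "t 1 = 1/2 + arctan w / pi" unfolding t_def w_def by (rule sphere_to_cube_first[OF n p])
  have wp: "0 < w" using stereo1_sign[OF p] pos by (auto simp: w_def not_less_iff_gr_or_eq)
  then have at: "0 < arctan w" by simp
  show "\<not> t 1 \<le> 1/2" unfolding t1 using at by (simp add: field_simps)
  have "arctan w < pi/2" by (rule arctan_ubound)
  then have s: "0 < 2 * t 1 - 1" "2 * t 1 - 1 < 1" unfolding t1 using at by (simp_all add: field_simps)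
  have "pi * (2 * t 1 - 1 - 1/2) = 2 * arctan w - pi/2" unfolding t1 by (simp add: field_simps)
  then have "tan (pi * (2 * t 1 - 1 - 1/2)) = (w\<^sup>2 - 1) / (2 * w)"
    using tan_double_arctan_shift(2)[of w] wp by simp
  then show "cube_to_sphere n k (t(1 := 2 * t 1 - 1)) = pinch_point n p"
    using cube_to_sphere_double_first[OF n p, of "2 * t 1 - 1"] wp s by (simp add: t_def w_def)
qed

lemma hconcat_eq_pinch:
  assumes n: "n \<ge> 1" and p: "p \<in> hawaiian_earring n"
  shows "hconcat n f g p = (if pinch_right n p = hbase then f (pinch_left n p) else g (pinch_right n p))"
proof (cases "p = hbase")
  case True then show ?thesis by (simp add: hconcat_def pinch_hbase)
next
  case nb: False
  obtain k where k: "k \<ge> 1" and pk: "p \<in> hsphere n k"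
    using p by (auto simp: hawaiian_earring_def)
  have p0: "0 < p 0" by (rule hsphere_first_coord_pos[OF pk k nb])
  define t where "t = sphere_to_cube n (real k) p"
  note H = hconcat_on_hsphere[OF pk k nb, of f g, folded t_def]
  consider "p 1 < 0" | "p 1 = 0" | "0 < p 1" by linarith
  then show ?thesis
  proof cases
    case 1
    moreover have "pinch_left n p = pinch_point n p" "pinch_right n p = hbase"
      using 1 p0 by (auto simp: pinch_left_def pinch_right_def)
    ultimately show ?thesis using H pinch_left_half[OF n pk k nb, folded t_def] by simp
  next
    case 2
    then have "stereo1 n p = 0" using stereo1_sign[OF pk k nb] by simp
    then have e: "t 1 = 1/2" "pinch_point n p = hbase"
      using sphere_to_cube_first[OF n pk k nb] pinch_point_stereo1_zero[of n p] by (auto simp: t_def)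
    then have "t(1 := 2 * t 1) = t(1 := 1)" by (simp add: mult.commute)
    then have "cube_to_sphere n k (t(1 := 2 * t 1)) = hbase"
      using open_cube_update_first_one[OF n, of t] by (simp add: cube_to_sphere_def)
    moreover have "pinch_left n p = hbase" "pinch_right n p = hbase"
      using 2 p0 e by (auto simp: pinch_left_def pinch_right_def)
    ultimately show ?thesis using H e by simp
  next
    case 3
    moreover have "pinch_right n p = pinch_point n p" "pinch_left n p = hbase"
      using 3 p0 by (auto simp: pinch_left_def pinch_right_def)
    moreover have "pinch_point n p \<noteq> hbase"
      using pinch_point_neq_hbase[of n p] sphere_index_hsphere[OF pk k nb] k stereo1_sign[OF pk k nb] 3
      by auto
    ultimately show ?thesis using H pinch_right_half[OF n pk k nb, folded t_def] by simp
  qed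
qed

lemma hconcat_id_in_hawaiian_earring:
  assumes n: "n \<ge> 1" and p: "p \<in> hawaiian_earring n"
  shows "hconcat n (\<lambda>q. q) (\<lambda>q. q) p \<in> hawaiian_earring n"
proof (cases "p = hbase")
  case True then show ?thesis by (simp add: hconcat_def hbase_in_hawaiian_earring)
next
  case False
  obtain k where k: "k \<ge> 1" "p \<in> hsphere n k" using p by (auto simp: hawaiian_earring_def)
  have "cube_to_sphere n k t \<in> hawaiian_earring n" for t
    using cube_to_sphere_in_hsphere[OF k(1)] k(1) by (auto simp: hawaiian_earring_def)
  then show ?thesis
    unfolding hconcat_def Let_def The_hsphere_index[OF k(2) k(1) False] using False by simp
qed

text \<open>The concatenation of two identities lands in the earring by construction, and by
  hconcat_eq_pinch it is one of the two pinch values.\<close>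

lemma pinch_in_hawaiian_earring:
  assumes n: "n \<ge> 1" and p: "p \<in> hawaiian_earring n"
  shows "pinch_left n p \<in> hawaiian_earring n" "pinch_right n p \<in> hawaiian_earring n"
  using hconcat_id_in_hawaiian_earring[OF n p] hconcat_eq_pinch[OF n p, of "\<lambda>q. q" "\<lambda>q. q"] pinch_left_or_right_hbase[of n p] hbase_in_hawaiian_earring
  by (auto split: if_splits)

section \<open>Continuity of the pinch maps\<close>

lemma pinch_denom_quartic_bound:
  fixes a w R :: real
  assumes a0: "0 < a" and a4: "a \<le> 4" and R: "0 \<le> R"
  shows "a\<^sup>2 * w^4 * (a + w\<^sup>2 + R) \<le> 4 * (4 * a * w\<^sup>2 + 4 * w\<^sup>2 * R + (w\<^sup>2 - 1)\<^sup>2)\<^sup>2"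
proof -
  define X where "X = a * w\<^sup>2"
  define Y where "Y = w\<^sup>2 * R"
  define Z where "Z = (w\<^sup>2 - 1)\<^sup>2"
  have nonneg: "0 \<le> X" "0 \<le> Y" "0 \<le> Z" using a0 R by (simp_all add: X_def Y_def Z_def)
  note D = square_ge_products[OF nonneg]
  have "a\<^sup>2 * w^4 * a = a * X\<^sup>2" by (simp add: X_def power2_eq_square power4_eq_xxxx)
  also have "\<dots> \<le> 4 * X\<^sup>2" using a4 by (intro mult_right_mono) auto
  finally have t1: "a\<^sup>2 * w^4 * a \<le> 4 * X\<^sup>2" .
  have "a\<^sup>2 * w^4 * R = a * (X * Y)" by (simp add: X_def Y_def power2_eq_square power4_eq_xxxx)
  also have "\<dots> \<le> 4 * (X * Y)" using a4 nonneg by (intro mult_right_mono) auto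
  finally have t2: "a\<^sup>2 * w^4 * R \<le> 4 * X * Y" by simp
  have t3: "a\<^sup>2 * w^4 * w\<^sup>2 \<le> 4 * X\<^sup>2 + (64/9) * X * Z"
    unfolding X_def Z_def by (rule sixth_power_le_quadratic_terms[OF a0 a4])
  have "a\<^sup>2 * w^4 * (a + w\<^sup>2 + R) \<le> 8 * X\<^sup>2 + (64/9) * X * Z + 4 * X * Y"
    using t1 t2 t3 by (simp add: algebra_simps)
  also have "\<dots> \<le> 4 * (4 * X + 4 * Y + Z)\<^sup>2" using D zero_le_power2[of "4 * X + 4 * Y + Z"] unfolding mult.assoc by linarith
  finally show ?thesis by (simp add: X_def Y_def Z_def mult.assoc)
qed

lemma sqnorm_stereo_identity:
  assumes n: "n \<ge> 1" and p0: "0 < p 0" and N: "sqnorm n p > 0"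
  shows "sqnorm n p * (index_weight n p + (stereo1 n p)\<^sup>2 + stereo_tail n p) = (index_weight n p)\<^sup>2"
proof -
  define N where "N = sqnorm n p"
  define S where "S = (\<Sum>i\<in>{1..n}. (p i)\<^sup>2)"
  have S: "S = N - (p 0)\<^sup>2" by (simp add: S_def N_def sqnorm_def sum_atLeast0_atMost_split)
  have u: "stereo n p i = p i * N / (p 0)\<^sup>2" for i
    using p0 N by (simp add: stereo_def sphere_index_def N_def power2_eq_square field_simps)
  have "(stereo1 n p)\<^sup>2 + stereo_tail n p = (\<Sum>i\<in>{1..n}. (stereo n p i)\<^sup>2)"
    by (simp only: stereo1_def stereo_tail_def sum_atLeast1_atMost_split[OF n])
  also have "\<dots> = N\<^sup>2 / (p 0)^4 * S"
  proof -
    have "(\<Sum>i\<in>{1..n}. (stereo n p i)\<^sup>2) = (\<Sum>i\<in>{1..n}. N\<^sup>2 / (p 0)^4 * (p i)\<^sup>2)"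
      by (intro sum.cong refl) (simp add: u power_divide power_mult_distrib power2_eq_square power4_eq_xxxx mult_ac)
    then show ?thesis by (simp add: S_def sum_distrib_left)
  qed
  finally have wr: "(stereo1 n p)\<^sup>2 + stereo_tail n p = N\<^sup>2 / (p 0)^4 * (N - (p 0)\<^sup>2)" by (simp add: S)
  have a: "index_weight n p = N\<^sup>2 / (p 0)\<^sup>2"
    using p0 N by (simp add: index_weight_def sphere_index_def N_def power_divide field_simps)
  show ?thesis
    unfolding N_def[symmetric] add.assoc wr a using p0 N
    by (simp add: N_def field_simps power2_eq_square power4_eq_xxxx)
qed

lemma pinch_point_sq_bound:
  assumes D: "pinch_denom n p > 0" and a: "index_weight n p > 0"
  shows "(pinch_point n p j)\<^sup>2 \<le> 4 * (index_weight n p)\<^sup>2 * (stereo1 n p)\<^sup>2 / pinch_denom n p"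
proof -
  define a where "a = index_weight n p"
  define w where "w = stereo1 n p"
  define D where "D = pinch_denom n p"
  have R: "stereo_tail n p \<ge> 0" by (simp add: stereo_tail_def sum_nonneg)
  have Dd: "D = 4 * a * w\<^sup>2 + 4 * w\<^sup>2 * stereo_tail n p + (w\<^sup>2 - 1)\<^sup>2" by (simp add: D_def pinch_denom_def a_def w_def)
  have M: "0 \<le> 4 * a\<^sup>2 * w\<^sup>2" by simp
  have Dp: "D > 0" using D by (simp add: D_def)
  have pinch_scale: "pinch_scale n p = 4 * a * w\<^sup>2 / D" by (simp add: pinch_scale_def a_def w_def D_def)
  have kk2: "4 / (sphere_index n p)\<^sup>2 = a" by (simp add: a_def index_weight_def)
  consider "j = 0" | "j = 1" | "j \<in> {2..n}" | "j \<noteq> 0" "j \<noteq> 1" "j \<notin> {2..n}" by blast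
  then have "(pinch_point n p j)\<^sup>2 \<le> 4 * a\<^sup>2 * w\<^sup>2 / D"
  proof cases
    case 1
    have "(pinch_point n p j)\<^sup>2 = (pinch_scale n p)\<^sup>2 * (4 / (sphere_index n p)\<^sup>2)"
      using 1 by (simp add: pinch_point_def power_mult_distrib power_divide)
    also have "\<dots> = 4 * a\<^sup>2 * w\<^sup>2 * (4 * a * w\<^sup>2) / D\<^sup>2"
      unfolding kk2 pinch_scale by (simp add: power_divide power_mult_distrib power2_eq_square)
    also have "\<dots> \<le> 4 * a\<^sup>2 * w\<^sup>2 / D"
      using a R by (intro mult_divide_square_le[OF _ _ Dp M]) (auto simp: Dd a_def)
    finally show ?thesis .
  next
    case 2
    have "(pinch_point n p j)\<^sup>2 = 4 * a\<^sup>2 * w\<^sup>2 * (w\<^sup>2 - 1)\<^sup>2 / D\<^sup>2"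
      using 2 by (simp add: pinch_point_def a_def w_def D_def power_divide power_mult_distrib power2_eq_square)
    also have "\<dots> \<le> 4 * a\<^sup>2 * w\<^sup>2 / D"
      using a R by (intro mult_divide_square_le[OF _ _ Dp M]) (auto simp: Dd a_def)
    finally show ?thesis .
  next
    case 3
    have uj: "(stereo n p j)\<^sup>2 \<le> stereo_tail n p"
      unfolding stereo_tail_def using 3 by (intro member_le_sum) auto
    have "(pinch_point n p j)\<^sup>2 = 4 * a\<^sup>2 * w\<^sup>2 * (4 * w\<^sup>2 * (stereo n p j)\<^sup>2) / D\<^sup>2"
      using 3 unfolding pinch_point_def pinch_scale by (simp add: power_divide power_mult_distrib power2_eq_square)
    also have "\<dots> \<le> 4 * a\<^sup>2 * w\<^sup>2 / D"
    proof (intro mult_divide_square_le[OF _ _ Dp M])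
      have "4 * w\<^sup>2 * (stereo n p j)\<^sup>2 \<le> 4 * w\<^sup>2 * stereo_tail n p" using uj by (intro mult_left_mono) auto
      moreover have "0 \<le> 4 * a * w\<^sup>2" "0 \<le> (w\<^sup>2 - 1)\<^sup>2" using a by (simp_all add: a_def)
      ultimately show "4 * w\<^sup>2 * (stereo n p j)\<^sup>2 \<le> D" unfolding Dd by linarith
    qed simp
    finally show ?thesis .
  next
    case 4
    then have "pinch_point n p j = 0" by (simp add: pinch_point_def)
    then show ?thesis using Dp by simp
  qed
  then show ?thesis by (simp add: a_def w_def D_def)
qed

lemma pinch_point_quartic_bound:
  assumes n: "n \<ge> 1" and p: "p \<in> hsphere n k" and k: "k \<ge> 1" and nb: "p \<noteq> hbase"
  shows "(pinch_point n p j)^4 \<le> 64 * sqnorm n p"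
proof -
  have p0: "0 < p 0" by (rule hsphere_first_coord_pos[OF p k nb])
  have N: "sqnorm n p = 2 * p 0 / real k" by (rule hsphere_sqnorm[OF p k])
  have Np: "sqnorm n p > 0" using N p0 k by simp
  have sphere_index: "sphere_index n p = real k" by (rule sphere_index_hsphere[OF p k nb])
  define a where "a = index_weight n p"
  define w where "w = stereo1 n p"
  define D where "D = pinch_denom n p"
  define R where "R = stereo_tail n p"
  have a0: "a > 0" and a4: "a \<le> 4" using k by (auto simp: a_def index_weight_def sphere_index field_simps)
  have R: "R \<ge> 0" by (simp add: R_def stereo_tail_def sum_nonneg)
  have Dp: "D > 0" using pinch_denom_pos[of n p] sphere_index k by (simp add: D_def)
  have Dd: "D = 4 * a * w\<^sup>2 + 4 * w\<^sup>2 * R + (w\<^sup>2 - 1)\<^sup>2" by (simp add: D_def pinch_denom_def a_def w_def R_def)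
  have id: "sqnorm n p * (a + w\<^sup>2 + R) = a\<^sup>2" using sqnorm_stereo_identity[OF n p0 Np] by (simp add: a_def w_def R_def)
  have q: "a + w\<^sup>2 + R > 0" using a0 R by (simp add: add_pos_nonneg)
  have sqnorm: "sqnorm n p = a\<^sup>2 / (a + w\<^sup>2 + R)" using id q by (simp add: field_simps)
  have f2: "(pinch_point n p j)\<^sup>2 \<le> 4 * a\<^sup>2 * w\<^sup>2 / D"
    using pinch_point_sq_bound[of n p j] Dp a0 by (simp add: a_def w_def D_def)
  have "(pinch_point n p j)^4 = ((pinch_point n p j)\<^sup>2)\<^sup>2" by simp
  also have "\<dots> \<le> (4 * a\<^sup>2 * w\<^sup>2 / D)\<^sup>2" using f2 by (intro power_mono) auto
  also have "\<dots> \<le> 64 * (a\<^sup>2 / (a + w\<^sup>2 + R))"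
  proof -
    have pi: "a\<^sup>2 * w^4 * (a + w\<^sup>2 + R) \<le> 4 * D\<^sup>2" using pinch_denom_quartic_bound[OF a0 a4 R, of w] by (simp add: Dd)
    have "(4 * a\<^sup>2 * w\<^sup>2 / D)\<^sup>2 = 16 * a\<^sup>2 * (a\<^sup>2 * w^4) / D\<^sup>2"
      by (simp add: power_divide power_mult_distrib power2_eq_square power4_eq_xxxx)
    also have "\<dots> \<le> 64 * (a\<^sup>2 / (a + w\<^sup>2 + R))"
      using pi q Dp a0 by (simp add: divide_simps)
    finally show ?thesis .
  qed
  finally show ?thesis by (simp add: sqnorm)
qed

lemma pinch_point_bound_hawaiian_earring:
  assumes "n \<ge> 1" "p \<in> hawaiian_earring n" "p \<noteq> hbase"
  shows "\<bar>pinch_point n p j\<bar> \<le> sqrt (sqrt (64 * sqnorm n p))"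
proof -
  obtain k where "k \<ge> 1" "p \<in> hsphere n k" using assms(2) by (auto simp: hawaiian_earring_def)
  then show ?thesis using pinch_point_quartic_bound[OF assms(1) _ _ assms(3)] abs_le_sqrt_sqrt by blast
qed

lemma continuous_on_coordinate [continuous_intros]: "continuous_on S (\<lambda>x::pt. x i)"
  by (rule continuous_on_subset[OF continuous_on_product_coordinates]) simp

lemma continuous_on_sqnorm: "continuous_on S (sqnorm n)"
  unfolding sqnorm_def[abs_def] by (intro continuous_intros)

lemma sqnorm_pos: "0 < p 0 \<Longrightarrow> 0 < sqnorm n p"
proof -
  assume p0: "0 < p 0"
  have "(p 0)\<^sup>2 \<le> sqnorm n p" unfolding sqnorm_def
    by (rule member_le_sum[where f="\<lambda>i. (p i)\<^sup>2" and i=0]) auto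
  moreover have "(p 0)\<^sup>2 > 0" using p0 by simp
  ultimately show ?thesis by linarith
qed

lemma sphere_index_pos: "0 < p 0 \<Longrightarrow> 0 < sphere_index n p"
  using sqnorm_pos[of p n] by (simp add: sphere_index_def)

definition halfspace :: "pt set" where
  "halfspace = {p. 0 < p 0}"

lemma open_halfspace: "open halfspace"
  unfolding halfspace_def using open_Collect_less[of "\<lambda>p::pt. 0" "\<lambda>p. p 0"] by simp

lemma hawaiian_earring_halfspace: "p \<in> hawaiian_earring n \<Longrightarrow> p \<noteq> hbase \<Longrightarrow> p \<in> halfspace"
  by (auto simp: hawaiian_earring_def halfspace_def intro: hsphere_first_coord_pos)

lemma sqnorm_nonzero: "x \<in> halfspace \<Longrightarrow> sqnorm n x \<noteq> 0"
  using sqnorm_pos[of x n] by (simp add: halfspace_def)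

lemma sphere_index_nonzero: "x \<in> halfspace \<Longrightarrow> sphere_index n x \<noteq> 0"
  using sphere_index_pos[of x n] by (simp add: halfspace_def)

lemma continuous_on_sphere_index: "continuous_on halfspace (sphere_index n)"
  unfolding sphere_index_def[abs_def] by (intro continuous_intros continuous_on_sqnorm) (auto simp: sqnorm_nonzero)

lemma continuous_on_stereo: "continuous_on halfspace (\<lambda>p. stereo n p i)"
  unfolding stereo_def by (intro continuous_intros continuous_on_sphere_index) (auto simp: sphere_index_nonzero halfspace_def)

lemma continuous_on_stereo1: "continuous_on halfspace (stereo1 n)"
  unfolding stereo1_def[abs_def] by (rule continuous_on_stereo)

lemma continuous_on_stereo_tail: "continuous_on halfspace (stereo_tail n)"
  unfolding stereo_tail_def[abs_def] by (intro continuous_intros continuous_on_stereo)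

lemma continuous_on_index_weight: "continuous_on halfspace (index_weight n)"
  unfolding index_weight_def[abs_def]
  by (intro continuous_intros continuous_on_sphere_index) (auto simp: sphere_index_nonzero)

lemma continuous_on_pinch_denom: "continuous_on halfspace (pinch_denom n)"
  unfolding pinch_denom_def[abs_def] by (intro continuous_intros continuous_on_index_weight continuous_on_stereo1 continuous_on_stereo_tail)

lemma pinch_denom_nonzero: "p \<in> halfspace \<Longrightarrow> pinch_denom n p \<noteq> 0"
  using pinch_denom_pos[of n p] sphere_index_pos[of p n] by (simp add: halfspace_def)

lemma continuous_on_pinch_scale: "continuous_on halfspace (pinch_scale n)"
  unfolding pinch_scale_def[abs_def] using pinch_denom_nonzero
  by (intro continuous_intros continuous_on_index_weight continuous_on_stereo1 continuous_on_pinch_denom) auto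

lemma continuous_on_pinch_point: "continuous_on halfspace (\<lambda>p. pinch_point n p j)"
proof -
  consider "j = 0" | "j = 1" | "j \<noteq> 0" "j \<noteq> 1" "j \<in> {2..n}" | "j \<noteq> 0" "j \<noteq> 1" "j \<notin> {2..n}" by blast
  then show ?thesis
  proof cases
    case 1 then show ?thesis unfolding pinch_point_def
      by simp (intro continuous_intros continuous_on_pinch_scale continuous_on_sphere_index, auto simp: sphere_index_nonzero)
  next
    case 2 then show ?thesis unfolding pinch_point_def using pinch_denom_nonzero
      by simp (intro continuous_intros continuous_on_index_weight continuous_on_stereo1 continuous_on_pinch_denom, auto)
  next
    case 3 then show ?thesis unfolding pinch_point_def
      by simp (intro continuous_intros continuous_on_pinch_scale continuous_on_stereo)
  next
    case 4 then show ?thesis unfolding pinch_point_def by simp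
  qed
qed

lemma continuous_on_pinch_coordinate:
  assumes n: "n \<ge> 1"
  shows "continuous_on (hawaiian_earring n) (\<lambda>p. pinch_left n p j)"
    "continuous_on (hawaiian_earring n) (\<lambda>p. pinch_right n p j)"
proof -
  let ?H = "hawaiian_earring n"
  have FmH: "continuous_on {x \<in> ?H \<inter> halfspace. Q x} (\<lambda>p. pinch_point n p j)" for Q
    by (rule continuous_on_subset[OF continuous_on_pinch_point]) auto
  have c1: "continuous_on (?H \<inter> halfspace) (\<lambda>p. pinch_left n p j)"
  proof -
    have "continuous_on (?H \<inter> halfspace) (\<lambda>p. if p 1 \<le> 0 then pinch_point n p j else 0)"
      by (rule continuous_on_cases_le[OF FmH continuous_on_const]) (auto intro: continuous_intros pinch_point_coordinate_zero)
    then show ?thesis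
      by (rule continuous_on_eq) (auto simp: pinch_left_def halfspace_def hbase_def)
  qed
  have c2: "continuous_on (?H \<inter> halfspace) (\<lambda>p. pinch_right n p j)"
  proof -
    have "continuous_on (?H \<inter> halfspace) (\<lambda>p. if - p 1 \<le> 0 then pinch_point n p j else 0)"
      by (rule continuous_on_cases_le[OF FmH continuous_on_const]) (auto intro: continuous_intros pinch_point_coordinate_zero)
    then show ?thesis
      by (rule continuous_on_eq) (auto simp: pinch_right_def halfspace_def hbase_def)
  qed
  have bd: "\<bar>pinch_left n p j\<bar> \<le> sqrt (sqrt (64 * sqnorm n p))" "\<bar>pinch_right n p j\<bar> \<le> sqrt (sqrt (64 * sqnorm n p))"
    if "p \<in> ?H" for p
  proof -
    have "p \<noteq> hbase" if "0 < p 0" using that by (auto simp: hbase_def)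
    moreover have "0 \<le> sqnorm n p" by (simp add: sqnorm_def sum_nonneg)
    ultimately show "\<bar>pinch_left n p j\<bar> \<le> sqrt (sqrt (64 * sqnorm n p))" "\<bar>pinch_right n p j\<bar> \<le> sqrt (sqrt (64 * sqnorm n p))"
      using pinch_point_bound_hawaiian_earring[OF n \<open>p \<in> ?H\<close>] by (auto simp: pinch_left_def pinch_right_def hbase_def)
  qed
  have g: "isCont (\<lambda>p. sqrt (sqrt (64 * sqnorm n p))) hbase"
    using continuous_on_sqnorm[of UNIV n] by (intro continuous_intros) (simp add: continuous_on_eq_continuous_at)
  have off: "?H - halfspace \<subseteq> {hbase}" using hawaiian_earring_halfspace by blast
  show "continuous_on ?H (\<lambda>p. pinch_left n p j)"
    by (rule continuous_on_dominated_at_point[OF open_halfspace off c1 _ _ g])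
      (auto simp: pinch_hbase_coordinate sqnorm_hbase bd(1))
  show "continuous_on ?H (\<lambda>p. pinch_right n p j)"
    by (rule continuous_on_dominated_at_point[OF open_halfspace off c2 _ _ g])
      (auto simp: pinch_hbase_coordinate sqnorm_hbase bd(2))
qed

lemma continuous_map_pinch:
  assumes n: "n \<ge> 1"
  shows "continuous_map (HE n) (HE n) (pinch_left n)" "continuous_map (HE n) (HE n) (pinch_right n)"
proof -
  have "continuous_on (hawaiian_earring n) (pinch_left n)" "continuous_on (hawaiian_earring n) (pinch_right n)"
    using continuous_on_pinch_coordinate[OF n] by (auto intro: continuous_on_coordinatewise_then_product)
  then show "continuous_map (HE n) (HE n) (pinch_left n)" "continuous_map (HE n) (HE n) (pinch_right n)"
    unfolding HE_def continuous_map_in_subtopology using pinch_in_hawaiian_earring[OF n] by auto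
qed

section \<open>Concatenation respects homotopy\<close>

lemma closedin_hbase: "closedin (HE n) {hbase}"
proof -
  have "closedin (HE n) (hawaiian_earring n \<inter> {hbase})"
    unfolding HE_def by (rule closedin_closed_Int) simp
  then show ?thesis using hbase_in_hawaiian_earring[of n] by (simp add: Int_absorb1)
qed

lemma continuous_map_hconcat_family:
  assumes n: "n \<ge> 1"
    and F: "continuous_map (prod_topology T (HE n)) Y F"
    and G: "continuous_map (prod_topology T (HE n)) Y G"
    and FG: "\<And>t. t \<in> topspace T \<Longrightarrow> F (t, hbase) = y0 \<and> G (t, hbase) = y0"
  shows "continuous_map (prod_topology T (HE n)) Y
           (\<lambda>z. hconcat n (\<lambda>q. F (fst z, q)) (\<lambda>q. G (fst z, q)) (snd z))"
proof -
  let ?Z = "prod_topology T (HE n)"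
  define A where "A b = {z \<in> topspace ?Z. (if b then pinch_right n else pinch_left n) (snd z) \<in> {hbase}}"
    for b
  define f where "f b = (if b then (\<lambda>z. F (fst z, pinch_left n (snd z)))
                              else (\<lambda>z. G (fst z, pinch_right n (snd z))))" for b
  have pinch_snd: "continuous_map ?Z (HE n) (\<lambda>z. pinch_left n (snd z))"
    "continuous_map ?Z (HE n) (\<lambda>z. pinch_right n (snd z))"
    using continuous_map_pinch[OF n] by (auto intro: continuous_map_compose[OF continuous_map_snd, unfolded o_def])
  have pinch_pair: "continuous_map ?Z ?Z (\<lambda>z. (fst z, pinch_left n (snd z)))"
    "continuous_map ?Z ?Z (\<lambda>z. (fst z, pinch_right n (snd z)))"
    using pinch_snd by (auto intro!: continuous_map_pairedI continuous_map_fst)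
  show ?thesis
  proof (rule pasting_lemma_closed[of UNIV ?Z A Y f])
    show "closedin ?Z (A b)" for b
      using closedin_continuous_map_preimage[OF pinch_snd(1) closedin_hbase]
        closedin_continuous_map_preimage[OF pinch_snd(2) closedin_hbase] by (auto simp: A_def)
    show "continuous_map (subtopology ?Z (A b)) Y (f b)" for b
      using continuous_map_compose[OF pinch_pair(1) F] continuous_map_compose[OF pinch_pair(2) G]
      by (cases b) (auto intro: continuous_map_from_subtopology simp: f_def o_def)
    show "f i z = f j z" if "z \<in> topspace ?Z \<inter> A i \<inter> A j" for i j z
      using that FG[of "fst z"] by (auto simp: A_def f_def)
    show "\<exists>b. b \<in> UNIV \<and> z \<in> A b \<and> hconcat n (\<lambda>q. F (fst z, q)) (\<lambda>q. G (fst z, q)) (snd z) = f b z"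
      if z: "z \<in> topspace ?Z" for z
    proof -
      have "snd z \<in> hawaiian_earring n" using z by (auto simp: HE_def)
      then show ?thesis
        using z pinch_left_or_right_hbase[of n "snd z"]
        by (auto simp: hconcat_eq_pinch[OF n] A_def f_def)
    qed
  qed simp
qed

lemma hconcat_base: "hconcat n f g hbase = f hbase"
  by (simp add: hconcat_def)

lemma hconcat_homotopic:
  assumes n: "n \<ge> 1"
    and ha: "homotopic_with (\<lambda>h. h hbase = y0) (HE n) Y a a'"
    and hb: "homotopic_with (\<lambda>h. h hbase = y0) (HE n) Y b b'"
  shows "homotopic_with (\<lambda>h. h hbase = y0) (HE n) Y (hconcat n a b) (hconcat n a' b')"
proof -
  obtain Ha where Ha: "continuous_map (prod_topology (top_of_set {0..1::real}) (HE n)) Y Ha"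
    "\<And>x. Ha (0, x) = a x" "\<And>x. Ha (1, x) = a' x" "\<And>t::real. t \<in> {0..1} \<Longrightarrow> Ha (t, hbase) = y0"
    using ha unfolding homotopic_with_def by blast
  obtain Hb where Hb: "continuous_map (prod_topology (top_of_set {0..1::real}) (HE n)) Y Hb"
    "\<And>x. Hb (0, x) = b x" "\<And>x. Hb (1, x) = b' x" "\<And>t::real. t \<in> {0..1} \<Longrightarrow> Hb (t, hbase) = y0"
    using hb unfolding homotopic_with_def by blast
  have a0: "(\<lambda>q. Ha (0, q)) = a" "(\<lambda>q. Ha (1, q)) = a'" using Ha by auto
  have b0: "(\<lambda>q. Hb (0, q)) = b" "(\<lambda>q. Hb (1, q)) = b'" using Hb by auto
  let ?H = "\<lambda>z. hconcat n (\<lambda>q. Ha (fst z, q)) (\<lambda>q. Hb (fst z, q)) (snd z)"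
  have "continuous_map (prod_topology (top_of_set {0..1::real}) (HE n)) Y ?H"
    using continuous_map_hconcat_family[OF n Ha(1) Hb(1)] Ha(4) Hb(4) by auto
  then show ?thesis
    unfolding homotopic_with_def using Ha(4) by (intro exI[of _ ?H]) (auto simp: a0 b0 hconcat_base)
qed

lemma hclass_self: "f \<in> hmaps n X x0 \<Longrightarrow> f \<in> hclass n X x0 f"
  by (simp add: hclass_def hmaps_def)

lemma hclass_eq:
  assumes "homotopic_with (\<lambda>h. h hbase = x0) (HE n) X f g"
  shows "hclass n X x0 f = hclass n X x0 g"
  using assms unfolding hclass_def
  by (auto intro: homotopic_with_trans homotopic_with_symD)

lemma hclass_eq_iff:
  assumes "f \<in> hmaps n X x0" "g \<in> hmaps n X x0"
  shows "hclass n X x0 f = hclass n X x0 g \<longleftrightarrow> homotopic_with (\<lambda>h. h hbase = x0) (HE n) X f g"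
proof
  assume "hclass n X x0 f = hclass n X x0 g"
  then have "g \<in> hclass n X x0 f" using hclass_self[OF assms(2)] by simp
  then show "homotopic_with (\<lambda>h. h hbase = x0) (HE n) X f g" by (simp add: hclass_def)
qed (rule hclass_eq)

lemma homotopic_with_some_hclass:
  assumes "f \<in> hmaps n X x0"
  shows "homotopic_with (\<lambda>h. h hbase = x0) (HE n) X f (SOME g. g \<in> hclass n X x0 f)"
proof -
  have "(SOME g. g \<in> hclass n X x0 f) \<in> hclass n X x0 f"
    using hclass_self[OF assms] by (metis someI)
  then show ?thesis by (simp add: hclass_def)
qed

lemma hconcat_in_hmaps:
  assumes n: "n \<ge> 1" and f: "f \<in> hmaps n X x0" and g: "g \<in> hmaps n X x0"
  shows "hconcat n f g \<in> hmaps n X x0"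
proof -
  have "homotopic_with (\<lambda>h. h hbase = x0) (HE n) X (hconcat n f g) (hconcat n f g)"
    using f g by (intro hconcat_homotopic[OF n]) (auto simp: hmaps_def homotopic_with_refl)
  then show ?thesis
    using homotopic_with_imp_continuous_maps homotopic_with_imp_property by (fastforce simp: hmaps_def)
qed

lemma hawaiian_group_mult_hclass:
  assumes n: "n \<ge> 1" and f: "f \<in> hmaps n X x0" and g: "g \<in> hmaps n X x0"
  shows "hclass n X x0 f \<otimes>\<^bsub>hawaiian_group n X x0\<^esub> hclass n X x0 g = hclass n X x0 (hconcat n f g)"
proof -
  have "homotopic_with (\<lambda>h. h hbase = x0) (HE n) X (hconcat n f g)
     (hconcat n (SOME f'. f' \<in> hclass n X x0 f) (SOME g'. g' \<in> hclass n X x0 g))"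
    by (rule hconcat_homotopic[OF n homotopic_with_some_hclass[OF f] homotopic_with_some_hclass[OF g]])
  then show ?thesis by (simp add: hawaiian_group_def hclass_eq)
qed

section \<open>Products\<close>

lemma hmaps_product_iff:
  "f \<in> hmaps n (product_topology X I) (restrict x I) \<longleftrightarrow>
     (\<forall>p\<in>hawaiian_earring n. f p \<in> extensional I) \<and>
     (\<forall>i\<in>I. continuous_map (HE n) (X i) (\<lambda>p. f p i)) \<and> f hbase = restrict x I"
  by (auto simp: hmaps_def continuous_map_componentwise HE_def)

lemma hmaps_product_component:
  assumes "f \<in> hmaps n (product_topology X I) (restrict x I)" "i \<in> I"
  shows "(\<lambda>p. f p i) \<in> hmaps n (X i) (x i)"
  using assms by (auto simp: hmaps_product_iff hmaps_def)

lemma homotopic_with_product_component: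
  assumes "homotopic_with (\<lambda>h. h hbase = restrict x I) (HE n) (product_topology X I) f g" "i \<in> I"
  shows "homotopic_with (\<lambda>h. h hbase = x i) (HE n) (X i) (\<lambda>p. f p i) (\<lambda>p. g p i)"
proof -
  have "homotopic_with (\<lambda>h. h hbase = x i) (HE n) (X i) ((\<lambda>y. y i) \<circ> f) ((\<lambda>y. y i) \<circ> g)"
    by (rule homotopic_with_compose_continuous_map_left[OF assms(1)
          continuous_map_product_projection[OF assms(2)]]) (use assms(2) in auto)
  then show ?thesis by (simp add: o_def)
qed

lemma homotopic_with_product_componentwise:
  assumes f: "f \<in> hmaps n (product_topology X I) (restrict x I)"
    and g: "g \<in> hmaps n (product_topology X I) (restrict x I)"
    and h: "\<forall>i\<in>I. homotopic_with (\<lambda>h. h hbase = x i) (HE n) (X i) (\<lambda>p. f p i) (\<lambda>p. g p i)"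
  shows "homotopic_with (\<lambda>h. h hbase = restrict x I) (HE n) (product_topology X I) f g"
proof -
  from h have "\<forall>i\<in>I. \<exists>H. continuous_map (prod_topology (top_of_set {0..1::real}) (HE n)) (X i) H \<and>
      (\<forall>p. H (0, p) = f p i) \<and> (\<forall>p. H (1, p) = g p i) \<and> (\<forall>t\<in>{0..1}. H (t, hbase) = x i)"
    unfolding homotopic_with_def by blast
  then obtain H where H: "\<And>i. i \<in> I \<Longrightarrow> continuous_map (prod_topology (top_of_set {0..1::real}) (HE n)) (X i) (H i)"
    "\<And>i p. i \<in> I \<Longrightarrow> H i (0, p) = f p i" "\<And>i p. i \<in> I \<Longrightarrow> H i (1, p) = g p i"
    "\<And>i t. i \<in> I \<Longrightarrow> t \<in> {0..1} \<Longrightarrow> H i (t, hbase) = x i"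
    by metis
  \<comment> \<open>homotopic_with fixes the ends on all of pt, not only on the earring, where f and g
    need not be extensional\<close>
  define K where "K = (\<lambda>z::real \<times> pt. if fst z = 0 then f (snd z) else if fst z = 1 then g (snd z)
                         else (\<lambda>i\<in>I. H i z))"
  have fe: "f p \<in> extensional I" "g p \<in> extensional I" if "p \<in> hawaiian_earring n" for p
    using f g that by (auto simp: hmaps_product_iff)
  have c: "continuous_map (prod_topology (top_of_set {0..1::real}) (HE n)) (product_topology X I) (\<lambda>z. \<lambda>i\<in>I. H i z)"
    using H(1) by (auto simp: continuous_map_componentwise)
  have "continuous_map (prod_topology (top_of_set {0..1::real}) (HE n)) (product_topology X I) K"
  proof (rule continuous_map_eq[OF c])
    fix z assume z: "z \<in> topspace (prod_topology (top_of_set {0..1::real}) (HE n))"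
    then have p: "snd z \<in> hawaiian_earring n" by (auto simp: HE_def)
    show "(\<lambda>i\<in>I. H i z) = K z"
      unfolding K_def
    proof (cases z)
      case (Pair t p)
      show "(\<lambda>i\<in>I. H i z) = (if fst z = 0 then f (snd z) else if fst z = 1 then g (snd z) else (\<lambda>i\<in>I. H i z))"
        using fe[OF p] H(2,3) by (auto simp: Pair fun_eq_iff extensional_def)
    qed
  qed
  moreover have "\<forall>t\<in>{0..1::real}. K (t, hbase) = restrict x I"
    using f g H(4) by (auto simp: K_def hmaps_def)
  ultimately show ?thesis
    unfolding homotopic_with_def
    by (intro exI[where x=K]) (auto simp: K_def)
qed

lemma hconcat_component: "(\<lambda>p. hconcat n f g p i) = hconcat n (\<lambda>p. f p i) (\<lambda>p. g p i)"
  by (auto simp: hconcat_def Let_def)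

definition component_classes ::
    "nat \<Rightarrow> ('i \<Rightarrow> 'a topology) \<Rightarrow> ('i \<Rightarrow> 'a) \<Rightarrow> 'i set \<Rightarrow> (pt \<Rightarrow> 'i \<Rightarrow> 'a) set \<Rightarrow> 'i \<Rightarrow> (pt \<Rightarrow> 'a) set"
  where "component_classes n X x I A = (\<lambda>i\<in>I. hclass n (X i) (x i) (\<lambda>p. (SOME f. f \<in> A) p i))"

lemma component_classes_hclass:
  assumes f: "f \<in> hmaps n (product_topology X I) (restrict x I)"
  shows "component_classes n X x I (hclass n (product_topology X I) (restrict x I) f)
           = (\<lambda>i\<in>I. hclass n (X i) (x i) (\<lambda>p. f p i))"
proof -
  have "hclass n (X i) (x i) (\<lambda>p. (SOME g. g \<in> hclass n (product_topology X I) (restrict x I) f) p i)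
      = hclass n (X i) (x i) (\<lambda>p. f p i)" if i: "i \<in> I" for i
    by (rule hclass_eq[OF homotopic_with_symD[OF homotopic_with_product_component[OF homotopic_with_some_hclass[OF f] i]]])
  then show ?thesis unfolding component_classes_def by (intro restrict_ext) simp
qed

lemma component_classes_hom:
  assumes n: "n \<ge> 1"
  shows "component_classes n X x I \<in> hom (hawaiian_group n (product_topology X I) (restrict x I))
           (product_group I (\<lambda>i. hawaiian_group n (X i) (x i)))"
proof (rule homI)
  let ?P = "product_topology X I" and ?x = "restrict x I"
  fix A assume "A \<in> carrier (hawaiian_group n ?P ?x)"
  then obtain f where f: "f \<in> hmaps n ?P ?x" and A: "A = hclass n ?P ?x f"
    by (auto simp: hawaiian_group_def)
  show "component_classes n X x I A \<in> carrier (product_group I (\<lambda>i. hawaiian_group n (X i) (x i)))"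
    using hmaps_product_component[OF f] by (auto simp: A component_classes_hclass[OF f] hawaiian_group_def)
next
  let ?P = "product_topology X I" and ?x = "restrict x I"
  let ?H = "\<lambda>i. hawaiian_group n (X i) (x i)"
  fix A B assume "A \<in> carrier (hawaiian_group n ?P ?x)" "B \<in> carrier (hawaiian_group n ?P ?x)"
  then obtain f g where f: "f \<in> hmaps n ?P ?x" and A: "A = hclass n ?P ?x f"
    and g: "g \<in> hmaps n ?P ?x" and B: "B = hclass n ?P ?x g"
    by (auto simp: hawaiian_group_def)
  have fg: "hconcat n f g \<in> hmaps n ?P ?x" by (rule hconcat_in_hmaps[OF n f g])
  have factor: "hclass n (X i) (x i) (\<lambda>p. f p i) \<otimes>\<^bsub>?H i\<^esub> hclass n (X i) (x i) (\<lambda>p. g p i)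
      = hclass n (X i) (x i) (hconcat n (\<lambda>p. f p i) (\<lambda>p. g p i))" if "i \<in> I" for i
    using hawaiian_group_mult_hclass[OF n hmaps_product_component[OF f that] hmaps_product_component[OF g that]] .
  show "component_classes n X x I (A \<otimes>\<^bsub>hawaiian_group n ?P ?x\<^esub> B)
      = component_classes n X x I A \<otimes>\<^bsub>product_group I ?H\<^esub> component_classes n X x I B"
    unfolding A B hawaiian_group_mult_hclass[OF n f g] component_classes_hclass[OF f]
      component_classes_hclass[OF g] component_classes_hclass[OF fg] hconcat_component
      product_group_def monoid.select_convs
    by (intro restrict_ext) (simp only: restrict_apply' factor)
qed

lemma inj_on_component_classes:
  "inj_on (component_classes n X x I) (carrier (hawaiian_group n (product_topology X I) (restrict x I)))"
proof (rule inj_onI)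
  let ?P = "product_topology X I" and ?x = "restrict x I"
  fix A B assume "A \<in> carrier (hawaiian_group n ?P ?x)" "B \<in> carrier (hawaiian_group n ?P ?x)"
    and eq: "component_classes n X x I A = component_classes n X x I B"
  then obtain f g where f: "f \<in> hmaps n ?P ?x" and A: "A = hclass n ?P ?x f"
    and g: "g \<in> hmaps n ?P ?x" and B: "B = hclass n ?P ?x g"
    by (auto simp: hawaiian_group_def)
  have "hclass n (X i) (x i) (\<lambda>p. f p i) = hclass n (X i) (x i) (\<lambda>p. g p i)" if "i \<in> I" for i
    using fun_cong[OF eq, of i] that by (simp add: A B component_classes_hclass[OF f] component_classes_hclass[OF g])
  then have "\<forall>i\<in>I. homotopic_with (\<lambda>h. h hbase = x i) (HE n) (X i) (\<lambda>p. f p i) (\<lambda>p. g p i)"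
    by (simp add: hclass_eq_iff hmaps_product_component[OF f] hmaps_product_component[OF g])
  then show "A = B" unfolding A B by (rule hclass_eq[OF homotopic_with_product_componentwise[OF f g]])
qed

lemma component_classes_image:
  "component_classes n X x I ` carrier (hawaiian_group n (product_topology X I) (restrict x I))
     = carrier (product_group I (\<lambda>i. hawaiian_group n (X i) (x i)))"
proof (intro equalityI subsetI)
  let ?P = "product_topology X I" and ?x = "restrict x I"
  fix c assume "c \<in> component_classes n X x I ` carrier (hawaiian_group n ?P ?x)"
  then obtain f where f: "f \<in> hmaps n ?P ?x" and c: "c = component_classes n X x I (hclass n ?P ?x f)"
    by (auto simp: hawaiian_group_def)
  show "c \<in> carrier (product_group I (\<lambda>i. hawaiian_group n (X i) (x i)))"
    using hmaps_product_component[OF f] by (auto simp: c component_classes_hclass[OF f] hawaiian_group_def)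
next
  let ?P = "product_topology X I" and ?x = "restrict x I"
  fix c assume "c \<in> carrier (product_group I (\<lambda>i. hawaiian_group n (X i) (x i)))"
  then have c: "c \<in> extensional I" "\<forall>i\<in>I. \<exists>h. h \<in> hmaps n (X i) (x i) \<and> c i = hclass n (X i) (x i) h"
    by (auto simp: hawaiian_group_def PiE_def)
  then obtain h where h: "\<And>i. i \<in> I \<Longrightarrow> h i \<in> hmaps n (X i) (x i)"
    "\<And>i. i \<in> I \<Longrightarrow> c i = hclass n (X i) (x i) (h i)" by metis
  define f where "f = (\<lambda>p. \<lambda>i\<in>I. h i p)"
  have f: "f \<in> hmaps n ?P ?x"
    using h(1) by (auto simp: hmaps_product_iff f_def hmaps_def)
  have "component_classes n X x I (hclass n ?P ?x f) = c"
    unfolding component_classes_hclass[OF f] using c(1) h(2)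
    by (auto simp: f_def extensional_def fun_eq_iff)
  then show "c \<in> component_classes n X x I ` carrier (hawaiian_group n ?P ?x)"
    using f by (auto simp: hawaiian_group_def)
qed

theorem theorem2p12:
  fixes X :: "'i \<Rightarrow> 'a topology" and x :: "'i \<Rightarrow> 'a" and I :: "'i set" and n :: nat
  assumes "n \<ge> 1"
    and "\<forall>i\<in>I. x i \<in> topspace (X i)"
  shows "hawaiian_group n (product_topology X I) (restrict x I)
           \<cong> product_group I (\<lambda>i. hawaiian_group n (X i) (x i))"
proof -
  have "component_classes n X x I \<in> iso (hawaiian_group n (product_topology X I) (restrict x I))
          (product_group I (\<lambda>i. hawaiian_group n (X i) (x i)))"
    unfolding iso_def
    using component_classes_hom[OF assms(1)] bij_betw_imageI[OF inj_on_component_classes component_classes_image]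
    by blast
  then show ?thesis by (auto simp: is_iso_def)
qed

end
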